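(* Let $z,w\in H^2$ be distinct points of the hyperbolic plane and $k\in\mathbb R$. Define the square hyperbola $S_k(z,w)=\{x\in H^2 : d_H(x,z)^2-d_H(x,w)^2=k\}$. Then the endpoints on the ideal boundary of $H^2$ of $S_k(z,w)$ are the same as the endpoints of the equidistant line $S_0(z,w)=\{x\in H^2: d_H(x,z)=d_H(x,w)\}$.
   Context: $d_H$ denotes the hyperbolic distance on $H^2$. *)

theory Defs
  imports Complex_Main
begin

definition hyp_plane :: "complex set" where
  "hyp_plane = {z. Im z > 0}"

definition dH :: "complex \<Rightarrow> complex \<Rightarrow> real" where
  "dH z w = arcosh (1 + (cmod (z - w))\<^sup>2 / (2 * Im z * Im w))"

definition square_hyperbola :: "real \<Rightarrow> complex \<Rightarrow> complex \<Rightarrow> complex set" where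
  "square_hyperbola k z w = {x \<in> hyp_plane. (dH x z)\<^sup>2 - (dH x w)\<^sup>2 = k}"

definition equidistant_line :: "complex \<Rightarrow> complex \<Rightarrow> complex set" where
  "equidistant_line z w = {x \<in> hyp_plane. dH x z = dH x w}"

text \<open>Ideal boundary of H^2 = R \<union> {\<infinity>}, encoded as real option (None = \<infinity>).
  The endpoints of a subset S of H^2 are the ideal boundary points that are limits
  of sequences in S (in the closure of the upper half-plane in the Riemann sphere).\<close>
definition ideal_endpoints :: "complex set \<Rightarrow> real option set" where
  "ideal_endpoints S =
     {Some r | r. \<exists>X. (\<forall>n. X n \<in> S) \<and> X \<longlonglongrightarrow> complex_of_real r}
     \<union> {None | u::unit. \<exists>X. (\<forall>n. X n \<in> S) \<and> filterlim (\<lambda>n. cmod (X n)) at_top sequentially}"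

end

(*
  For x in the upper half-plane, cosh d_H(x,z) = P and cosh d_H(x,w) = Q with
  P = ((Re x - Re z)^2 + Im x^2 + Im z^2) / (2 Im x Im z).  If P/Q stays above some rho > 1
  while P tends to infinity, then arcosh P >= arcosh Q + c with c = log((1 + rho)/2), whence
  d_H(x,z)^2 - d_H(x,w)^2 >= c log P tends to infinity.  Towards a real point s the ratio P/Q
  tends to |z - s|^2 Im w / (|w - s|^2 Im z), towards infinity it tends to Im w / Im z.  So a
  square hyperbola S_k, on which the difference is the constant k, can only accumulate at those
  real s where z and w lie on a common horocycle based at s, and at infinity only if
  Im z = Im w: conditions that do not involve k.  Conversely such an s is a simple root of the
  quadratic |z - s|^2 Im w - |w - s|^2 Im z, so the difference tends to +infinity at nearby
  real points on one side of s and to -infinity on the other, and the intermediate value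
  theorem on a path joining them yields points of S_k close to s; the same argument with
  two far-out real points works at infinity when Im z = Im w.  As S_0 is the equidistant line,
  the endpoint sets agree.
*)
theory Submission
  imports Defs "HOL-Analysis.Analysis" "HOL-Real_Asymp.Real_Asymp"
begin

lemma arcosh_sq_diff_ge:
  fixes P Q c :: real
  assumes Q1: "1 \<le> Q" and c0: "0 < c" and PQ: "Q * exp c \<le> P"
  shows "c * ln P \<le> (arcosh P)\<^sup>2 - (arcosh Q)\<^sup>2"
proof -
  define a where "a = arcosh P"
  define b where "b = arcosh Q"
  have "Q \<le> Q * exp c" using Q1 c0 mult_left_mono[of 1 "exp c" Q] by simp
  hence P1: "1 \<le> P" using Q1 PQ by linarith
  have b0: "0 \<le> b" and cb: "cosh b = Q"
    using Q1 P1 by (simp_all add: a_def b_def)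
  have "cosh (b + c) = cosh b * cosh c + sinh b * sinh c" by (rule cosh_add)
  also have "\<dots> \<le> cosh b * (cosh c + sinh c)"
    using sinh_le_cosh_real[of b] c0 by (simp add: distrib_left mult_right_mono)
  also have "\<dots> \<le> P" using PQ cb by (simp add: cosh_plus_sinh)
  finally have "arcosh (cosh (b + c)) \<le> a"
    using P1 cosh_real_ge_1[of "b + c"] arcosh_less_iff_real[of P "cosh (b + c)"]
    by (simp add: a_def not_less[symmetric])
  hence "b + c \<le> a" using b0 c0 arcosh_cosh_real[of "b + c"] by simp
  moreover have "ln P \<le> a"
    using P1 by (simp add: a_def arcosh_real_def, subst ln_le_cancel_iff) (auto intro!: add_pos_nonneg)
  ultimately have "c * ln P \<le> (a - b) * (a + b)"
    using P1 b0 c0 by (intro mult_mono) auto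
  thus ?thesis by (simp add: a_def b_def power2_eq_square algebra_simps)
qed

lemma arcosh_sq_diff_tendsto_at_top:
  fixes P Q :: "'a \<Rightarrow> real"
  assumes Q1: "\<forall>\<^sub>F x in F. 1 \<le> Q x" and P: "filterlim P at_top F"
    and ratio: "((\<lambda>x. P x / Q x) \<longlongrightarrow> \<rho>) F" and \<rho>1: "1 < \<rho>"
  shows "filterlim (\<lambda>x. (arcosh (P x))\<^sup>2 - (arcosh (Q x))\<^sup>2) at_top F"
proof -
  define c where "c = ln ((1 + \<rho>) / 2)"
  have c0: "0 < c" and "exp c < \<rho>" using \<rho>1 by (simp_all add: c_def)
  with ratio have "\<forall>\<^sub>F x in F. exp c < P x / Q x" by (simp add: order_tendstoD(1))
  with Q1 have "\<forall>\<^sub>F x in F. c * ln (P x) \<le> (arcosh (P x))\<^sup>2 - (arcosh (Q x))\<^sup>2"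
    by eventually_elim (rule arcosh_sq_diff_ge[OF _ c0], auto simp: field_simps)
  moreover have "filterlim (\<lambda>x. c * ln (P x)) at_top F"
    by (rule filterlim_tendsto_pos_mult_at_top[OF tendsto_const c0
          filterlim_compose[OF ln_at_top P]])
  ultimately show ?thesis by (rule filterlim_at_top_mono[rotated])
qed

definition cosh_numer :: "complex \<Rightarrow> complex \<Rightarrow> real" where
  "cosh_numer z x = (Re x - Re z)\<^sup>2 + (Im x)\<^sup>2 + (Im z)\<^sup>2"

lemma dH_eq_arcosh:
  assumes "0 < Im x" "0 < Im z"
  shows "dH x z = arcosh (cosh_numer z x / (2 * Im x * Im z))"
proof -
  have "(cmod (x - z))\<^sup>2 = (Re x - Re z)\<^sup>2 + (Im x - Im z)\<^sup>2" by (simp add: cmod_power2)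
  hence "1 + (cmod (x - z))\<^sup>2 / (2 * Im x * Im z) = cosh_numer z x / (2 * Im x * Im z)"
    using assms by (simp add: cosh_numer_def field_simps power2_eq_square)
  thus ?thesis by (simp add: dH_def)
qed

lemma cosh_numer_ge: "2 * Im x * Im z \<le> cosh_numer z x"
  using sum_squares_bound[of "Im x" "Im z"] zero_le_power2[of "Re x - Re z"]
  unfolding cosh_numer_def by linarith

lemma cosh_numer_pos: "0 < Im z \<Longrightarrow> 0 < cosh_numer z x"
  by (simp add: cosh_numer_def add_nonneg_pos)

definition sqdist_diff :: "complex \<Rightarrow> complex \<Rightarrow> complex \<Rightarrow> real" where
  "sqdist_diff z w x = (dH x z)\<^sup>2 - (dH x w)\<^sup>2"

lemma sqdist_diff_swap: "sqdist_diff w z x = - sqdist_diff z w x"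
  by (simp add: sqdist_diff_def)

lemma mem_square_hyperbola_iff:
  "x \<in> square_hyperbola k z w \<longleftrightarrow> 0 < Im x \<and> sqdist_diff z w x = k"
  by (auto simp: square_hyperbola_def hyp_plane_def sqdist_diff_def)

lemma square_hyperbola_swap: "square_hyperbola k z w = square_hyperbola (- k) w z"
  by (auto simp: square_hyperbola_def sqdist_diff_def)

lemma continuous_on_dH:
  assumes "0 < Im z"
  shows "continuous_on hyp_plane (\<lambda>x. dH x z)"
proof -
  have "continuous_on {1..} (arcosh :: real \<Rightarrow> real)" by (rule continuous_on_arcosh) simp
  moreover have "continuous_on hyp_plane (\<lambda>x. 1 + (cmod (x - z))\<^sup>2 / (2 * Im x * Im z))"
    using assms by (intro continuous_intros) (auto simp: hyp_plane_def)
  moreover have "(\<lambda>x. 1 + (cmod (x - z))\<^sup>2 / (2 * Im x * Im z)) ` hyp_plane \<subseteq> {1..}"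
    using assms by (auto simp: hyp_plane_def)
  ultimately show ?thesis unfolding dH_def by (rule continuous_on_compose2)
qed

lemma continuous_on_sqdist_diff:
  "0 < Im z \<Longrightarrow> 0 < Im w \<Longrightarrow> continuous_on hyp_plane (sqdist_diff z w)"
  unfolding sqdist_diff_def[abs_def] by (intro continuous_intros continuous_on_dH)

lemma cosh_numer_asymp_norm_sq: "((\<lambda>x. cosh_numer z x / (cmod x)\<^sup>2) \<longlongrightarrow> 1) at_infinity"
proof -
  define g where "g t = (2 * t * \<bar>Re z\<bar> + (cmod z)\<^sup>2) / t\<^sup>2" for t
  have "(g \<longlongrightarrow> 0) at_top" unfolding g_def by real_asymp
  hence "((\<lambda>x. g (cmod x)) \<longlongrightarrow> 0) at_infinity"
    by (rule filterlim_compose[OF _ filterlim_at_infinity_imp_norm_at_top[OF filterlim_ident]])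
  moreover have "\<forall>\<^sub>F x in at_infinity. norm (cosh_numer z x / (cmod x)\<^sup>2 - 1) \<le> g (cmod x)"
    unfolding eventually_at_infinity
  proof (intro exI allI impI)
    fix x :: complex assume "1 \<le> cmod x"
    have eq: "cosh_numer z x = (cmod x)\<^sup>2 - 2 * Re x * Re z + (cmod z)\<^sup>2"
      by (simp add: cosh_numer_def cmod_power2 power2_diff)
    have "cosh_numer z x / (cmod x)\<^sup>2 - 1 = (- 2 * Re x * Re z + (cmod z)\<^sup>2) / (cmod x)\<^sup>2"
      using \<open>1 \<le> cmod x\<close> by (subst eq) (auto simp: diff_divide_distrib add_divide_distrib)
    moreover have "\<bar>- 2 * Re x * Re z + (cmod z)\<^sup>2\<bar> \<le> 2 * \<bar>Re x\<bar> * \<bar>Re z\<bar> + (cmod z)\<^sup>2"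
      using abs_triangle_ineq[of "- 2 * Re x * Re z" "(cmod z)\<^sup>2"] by (simp add: abs_mult)
    moreover have "2 * \<bar>Re x\<bar> * \<bar>Re z\<bar> \<le> 2 * cmod x * \<bar>Re z\<bar>"
      by (intro mult_right_mono mult_left_mono abs_Re_le_cmod) auto
    ultimately show "norm (cosh_numer z x / (cmod x)\<^sup>2 - 1) \<le> g (cmod x)"
      by (simp add: g_def divide_right_mono)
  qed
  ultimately show ?thesis by (subst LIM_zero_iff[symmetric]) (rule Lim_null_comparison)
qed

(* Vanishes iff z and w lie on a common horocycle based at the real point s,
   since cosh_numer z (of_real s) = |z - s|^2. *)
definition horo_gap :: "complex \<Rightarrow> complex \<Rightarrow> real \<Rightarrow> real" where
  "horo_gap z w s = cosh_numer z (of_real s) * Im w - cosh_numer w (of_real s) * Im z"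

lemma horo_gap_swap: "horo_gap w z s = - horo_gap z w s"
  by (simp add: horo_gap_def)

lemma sqdist_diff_tendsto_at_top:
  fixes F :: "complex filter"
  assumes z0: "0 < Im z" and w0: "0 < Im w" and x0: "\<forall>\<^sub>F x in F. 0 < Im x"
    and P: "filterlim (\<lambda>x. cosh_numer z x / (2 * Im x * Im z)) at_top F"
    and ratio: "((\<lambda>x. cosh_numer z x * Im w / (cosh_numer w x * Im z)) \<longlongrightarrow> \<rho>) F"
    and \<rho>1: "1 < \<rho>"
  shows "filterlim (sqdist_diff z w) at_top F"
proof -
  define Q where "Q x = cosh_numer w x / (2 * Im x * Im w)" for x
  have "\<forall>\<^sub>F x in F. 1 \<le> Q x"
    using x0 by eventually_elim (use w0 cosh_numer_ge[of _ w] in \<open>simp add: Q_def\<close>)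
  moreover have "\<forall>\<^sub>F x in F. cosh_numer z x * Im w / (cosh_numer w x * Im z)
                              = cosh_numer z x / (2 * Im x * Im z) / Q x"
    using x0 by eventually_elim (use z0 w0 cosh_numer_pos[OF w0] in \<open>simp add: Q_def field_simps\<close>)
  ultimately have lim: "filterlim (\<lambda>x. (arcosh (cosh_numer z x / (2 * Im x * Im z)))\<^sup>2
                                   - (arcosh (Q x))\<^sup>2) at_top F"
    using ratio by (intro arcosh_sq_diff_tendsto_at_top[OF _ P _ \<rho>1]) (auto dest: tendsto_cong)
  have "\<forall>\<^sub>F x in F. (arcosh (cosh_numer z x / (2 * Im x * Im z)))\<^sup>2 - (arcosh (Q x))\<^sup>2
                              = sqdist_diff z w x"
    using x0 by eventually_elim (simp add: sqdist_diff_def Q_def dH_eq_arcosh z0 w0)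
  with lim show ?thesis by (simp add: filterlim_cong[OF refl refl])
qed

lemma sqdist_diff_tendsto_at_boundary:
  assumes z0: "0 < Im z" and w0: "0 < Im w" and gap: "0 < horo_gap z w r"
  shows "filterlim (sqdist_diff z w) at_top (at (of_real r) within hyp_plane)"
proof (rule sqdist_diff_tendsto_at_top[OF z0 w0])
  let ?G = "at (complex_of_real r) within hyp_plane"
  show x0: "\<forall>\<^sub>F x in ?G. 0 < Im x"
    by (simp add: eventually_at_filter hyp_plane_def)
  have "(Im \<longlongrightarrow> 0) ?G"
    using tendsto_Im[OF tendsto_ident_at, of "of_real r" hyp_plane] by simp
  hence inv: "filterlim (\<lambda>x. inverse (Im x)) at_top ?G" using x0 by (rule filterlim_inverse_at_top)
  have lim: "((\<lambda>x. cosh_numer z x / (2 * Im z)) \<longlongrightarrow> cosh_numer z (of_real r) / (2 * Im z)) ?G"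
    unfolding cosh_numer_def by (intro tendsto_intros) (use z0 in auto)
  have "filterlim (\<lambda>x. cosh_numer z x / (2 * Im z) * inverse (Im x)) at_top ?G"
    using z0 cosh_numer_pos[OF z0] by (intro filterlim_tendsto_pos_mult_at_top[OF lim _ inv]) auto
  thus "filterlim (\<lambda>x. cosh_numer z x / (2 * Im x * Im z)) at_top ?G"
    using z0 by (simp add: field_simps)
  show "((\<lambda>x. cosh_numer z x * Im w / (cosh_numer w x * Im z)) \<longlongrightarrow>
         cosh_numer z (of_real r) * Im w / (cosh_numer w (of_real r) * Im z)) ?G"
    using z0 cosh_numer_pos[OF w0, of "of_real r"] unfolding cosh_numer_def
    by (intro tendsto_intros) auto
  show "1 < cosh_numer z (of_real r) * Im w / (cosh_numer w (of_real r) * Im z)"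
    using gap z0 cosh_numer_pos[OF w0, of "of_real r"] by (simp add: horo_gap_def field_simps)
qed

lemma cosh_numer_div_tendsto_at_infinity:
  assumes z0: "0 < Im z"
  shows "filterlim (\<lambda>x. cosh_numer z x / (2 * Im x * Im z)) at_top
           (inf at_infinity (principal hyp_plane))"
proof -
  let ?G = "inf at_infinity (principal hyp_plane)"
  have "filterlim cmod at_top ?G"
    by (rule filterlim_mono[OF filterlim_at_infinity_imp_norm_at_top[OF filterlim_ident] order_refl inf_le1])
  hence "filterlim (\<lambda>x. cosh_numer z x / (cmod x)\<^sup>2 * (inverse (2 * Im z) * cmod x)) at_top ?G"
    using z0 by (intro filterlim_tendsto_pos_mult_at_top[OF tendsto_mono[OF inf_le1 cosh_numer_asymp_norm_sq]]
        filterlim_tendsto_pos_mult_at_top[OF tendsto_const]) auto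
  moreover have "\<forall>\<^sub>F x in ?G. cosh_numer z x / (cmod x)\<^sup>2 * (inverse (2 * Im z) * cmod x)
                               \<le> cosh_numer z x / (2 * Im x * Im z)"
    unfolding eventually_inf_principal
  proof (intro always_eventually allI impI)
    fix x assume "x \<in> hyp_plane"
    hence x0: "0 < Im x" by (simp add: hyp_plane_def)
    hence "x \<noteq> 0" by auto
    have "cosh_numer z x / (cmod x)\<^sup>2 * (inverse (2 * Im z) * cmod x)
            = cosh_numer z x / (2 * cmod x * Im z)"
      using \<open>x \<noteq> 0\<close> by (simp add: field_simps power2_eq_square)
    also have "\<dots> \<le> cosh_numer z x / (2 * Im x * Im z)"
      using x0 z0 abs_Im_le_cmod[of x] cosh_numer_pos[OF z0, of x]
      by (intro divide_left_mono mult_right_mono) (auto intro!: mult_pos_pos)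
    finally show "cosh_numer z x / (cmod x)\<^sup>2 * (inverse (2 * Im z) * cmod x)
                    \<le> cosh_numer z x / (2 * Im x * Im z)" .
  qed
  ultimately show ?thesis by (rule filterlim_at_top_mono)
qed

lemma sqdist_diff_tendsto_at_infinity:
  assumes z0: "0 < Im z" and zw: "Im z < Im w"
  shows "filterlim (sqdist_diff z w) at_top (inf at_infinity (principal hyp_plane))"
proof -
  let ?G = "inf at_infinity (principal hyp_plane)"
  have w0: "0 < Im w" using z0 zw by simp
  have x0: "\<forall>\<^sub>F x in ?G. 0 < Im x"
    by (simp add: eventually_inf_principal hyp_plane_def)
  have asymp: "((\<lambda>x. cosh_numer u x / (cmod x)\<^sup>2) \<longlongrightarrow> 1) ?G" for u
    by (rule tendsto_mono[OF inf_le1 cosh_numer_asymp_norm_sq])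
  have "((\<lambda>x. cosh_numer z x / (cmod x)\<^sup>2 / (cosh_numer w x / (cmod x)\<^sup>2) * (Im w / Im z))
          \<longlongrightarrow> 1 / 1 * (Im w / Im z)) ?G"
    by (intro tendsto_intros asymp) simp
  moreover have "\<forall>\<^sub>F x in ?G. cosh_numer z x / (cmod x)\<^sup>2 / (cosh_numer w x / (cmod x)\<^sup>2) * (Im w / Im z)
                   = cosh_numer z x * Im w / (cosh_numer w x * Im z)"
    using x0 by eventually_elim (use z0 cosh_numer_pos[OF w0] in \<open>auto simp: field_simps\<close>)
  ultimately have "((\<lambda>x. cosh_numer z x * Im w / (cosh_numer w x * Im z)) \<longlongrightarrow> Im w / Im z) ?G"
    by (simp add: Lim_transform_eventually)
  moreover have "1 < Im w / Im z" using z0 zw by simp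
  ultimately show ?thesis
    by (rule sqdist_diff_tendsto_at_top[OF z0 w0 x0 cosh_numer_div_tendsto_at_infinity[OF z0]])
qed

lemma square_hyperbola_not_along:
  assumes lim: "filterlim (sqdist_diff z w) at_top F" and X: "filterlim X F sequentially"
    and S: "\<forall>n. X n \<in> square_hyperbola k z w"
  shows False
proof -
  have "\<forall>\<^sub>F n in sequentially. k < sqdist_diff z w (X n)"
    using filterlim_compose[OF lim X] by (simp add: filterlim_at_top_dense)
  then obtain n where "k < sqdist_diff z w (X n)"
    using eventually_happens'[OF trivial_limit_sequentially] by blast
  with S show False by (simp add: mem_square_hyperbola_iff)
qed

lemma square_hyperbola_no_sequence_to_boundary:
  assumes z0: "0 < Im z" and w0: "0 < Im w" and gap: "horo_gap z w r \<noteq> 0"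
    and S: "\<forall>n. X n \<in> square_hyperbola k z w"
  shows "\<not> X \<longlonglongrightarrow> of_real r"
proof
  assume "X \<longlonglongrightarrow> of_real r"
  moreover have "X n \<in> hyp_plane \<and> X n \<noteq> of_real r" for n
    using S[rule_format, of n] by (auto simp: mem_square_hyperbola_iff hyp_plane_def)
  ultimately have X: "filterlim X (at (of_real r) within hyp_plane) sequentially"
    by (simp add: filterlim_at)
  consider "0 < horo_gap z w r" | "0 < horo_gap w z r"
    using gap horo_gap_swap[of w z r] by linarith
  thus False
  proof cases
    case 1
    from square_hyperbola_not_along[OF sqdist_diff_tendsto_at_boundary[OF z0 w0 1] X S] show False .
  next
    case 2
    from S have "\<forall>n. X n \<in> square_hyperbola (- k) w z" by (simp add: square_hyperbola_swap[of k])
    from square_hyperbola_not_along[OF sqdist_diff_tendsto_at_boundary[OF w0 z0 2] X this] show False .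
  qed
qed

lemma square_hyperbola_no_sequence_to_infinity:
  assumes z0: "0 < Im z" and w0: "0 < Im w" and heights: "Im z \<noteq> Im w"
    and S: "\<forall>n. X n \<in> square_hyperbola k z w"
  shows "\<not> filterlim (\<lambda>n. cmod (X n)) at_top sequentially"
proof
  assume "filterlim (\<lambda>n. cmod (X n)) at_top sequentially"
  moreover have "\<forall>n. X n \<in> hyp_plane"
    using S by (auto simp: mem_square_hyperbola_iff hyp_plane_def)
  ultimately have X: "filterlim X (inf at_infinity (principal hyp_plane)) sequentially"
    by (simp add: filterlim_inf filterlim_principal filterlim_at_infinity_conv_norm_at_top)
  consider "Im z < Im w" | "Im w < Im z" using heights by linarith
  thus False
  proof cases
    case 1
    from square_hyperbola_not_along[OF sqdist_diff_tendsto_at_infinity[OF z0 1] X S] show False .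
  next
    case 2
    from S have "\<forall>n. X n \<in> square_hyperbola (- k) w z" by (simp add: square_hyperbola_swap[of k])
    from square_hyperbola_not_along[OF sqdist_diff_tendsto_at_infinity[OF w0 2] X this] show False .
  qed
qed

lemma sign_change_at_simple_root:
  fixes f :: "real \<Rightarrow> real"
  assumes der: "DERIV f r :> d" and d: "d \<noteq> 0" and root: "f r = 0" and e: "0 < e"
  shows "\<exists>s1 s2. \<bar>s1 - r\<bar> < e \<and> \<bar>s2 - r\<bar> < e \<and> 0 < f s1 \<and> f s2 < 0"
proof -
  have increasing: "\<exists>s1 s2. \<bar>s1 - r\<bar> < e \<and> \<bar>s2 - r\<bar> < e \<and> 0 < g s1 \<and> g s2 < 0"
    if g: "DERIV g r :> c" "0 < c" "g r = 0" for g c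
  proof -
    obtain a where "0 < a" and a: "\<forall>h>0. h < a \<longrightarrow> g r < g (r + h)"
      using DERIV_pos_inc_right[OF g(1,2)] by blast
    obtain b where "0 < b" and b: "\<forall>h>0. h < b \<longrightarrow> g (r - h) < g r"
      using DERIV_pos_inc_left[OF g(1,2)] by blast
    define h where "h = min e (min a b) / 2"
    have "0 < h" "h < e" "h < a" "h < b" using \<open>0 < a\<close> \<open>0 < b\<close> e by (auto simp: h_def)
    thus ?thesis using a b g(3) by (intro exI[of _ "r + h"] exI[of _ "r - h"]) auto
  qed
  show ?thesis
  proof (cases "0 < d")
    case True
    from increasing[OF der True root] show ?thesis .
  next
    case False
    hence "DERIV (\<lambda>x. - f x) r :> - d" "0 < - d" using der d by (auto intro: DERIV_minus)
    from increasing[OF this] root show ?thesis by auto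
  qed
qed

lemma horo_gap_has_derivative:
  "DERIV (horo_gap z w) s :> 2 * ((s - Re z) * Im w - (s - Re w) * Im z)"
proof -
  have "horo_gap z w = (\<lambda>s. ((s - Re z)\<^sup>2 + (Im z)\<^sup>2) * Im w - ((s - Re w)\<^sup>2 + (Im w)\<^sup>2) * Im z)"
    by (simp add: fun_eq_iff horo_gap_def cosh_numer_def)
  thus ?thesis by (auto intro!: derivative_eq_intros simp: algebra_simps)
qed

lemma horo_gap_simple_root:
  assumes z0: "0 < Im z" and w0: "0 < Im w" and zw: "z \<noteq> w" and root: "horo_gap z w r = 0"
  shows "(r - Re z) * Im w - (r - Re w) * Im z \<noteq> 0"
proof
  assume D: "(r - Re z) * Im w - (r - Re w) * Im z = 0"
  have "(Im w - Im z) * horo_gap z w r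
          = ((r - Re z) * Im w - (r - Re w) * Im z)\<^sup>2
            - Im z * Im w * ((Re z - Re w)\<^sup>2 + (Im z - Im w)\<^sup>2)"
    by (simp add: horo_gap_def cosh_numer_def power2_eq_square algebra_simps)
  hence "Im z * Im w * ((Re z - Re w)\<^sup>2 + (Im z - Im w)\<^sup>2) = 0" using D root by simp
  moreover have "(Re z - Re w)\<^sup>2 + (Im z - Im w)\<^sup>2 > 0"
    using zw complex_eq_iff by (auto simp: sum_power2_gt_zero_iff)
  ultimately show False using z0 w0 by simp
qed

lemma sqdist_diff_tendsto_vertical:
  assumes z0: "0 < Im z" and w0: "0 < Im w" and gap: "0 < horo_gap z w s"
  shows "filterlim (\<lambda>t. sqdist_diff z w (Complex s t)) at_top (at_right 0)"
proof -
  have "((\<lambda>t. Complex s t) \<longlongrightarrow> of_real s) (at_right 0)"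
    using tendsto_Complex[OF tendsto_const tendsto_ident_at, of s 0 "{0<..}"]
    by (simp add: complex_of_real_def)
  moreover have "\<forall>\<^sub>F t in at_right 0. Complex s t \<in> hyp_plane \<and> Complex s t \<noteq> of_real s"
    using eventually_at_right_less[of 0]
    by eventually_elim (auto simp: hyp_plane_def complex_eq_iff)
  ultimately have "filterlim (\<lambda>t. Complex s t) (at (of_real s) within hyp_plane) (at_right 0)"
    by (simp add: filterlim_at)
  thus ?thesis by (rule filterlim_compose[OF sqdist_diff_tendsto_at_boundary[OF z0 w0 gap]])
qed

lemma square_hyperbola_meets_connected:
  assumes z0: "0 < Im z" and w0: "0 < Im w"
    and s1: "0 < horo_gap z w s1" and s2: "horo_gap z w s2 < 0"
    and C: "\<forall>\<^sub>F t in at_right 0. \<exists>C. connected C \<and> C \<subseteq> hyp_plane \<inter> A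
                                     \<and> Complex s1 t \<in> C \<and> Complex s2 t \<in> C"
  shows "\<exists>x\<in>A. x \<in> square_hyperbola k z w"
proof -
  have "0 < horo_gap w z s2" using s2 horo_gap_swap[of w z s2] by simp
  have "\<forall>\<^sub>F t in at_right 0. k \<le> sqdist_diff z w (Complex s1 t)"
    using sqdist_diff_tendsto_vertical[OF z0 w0 s1] by (simp add: filterlim_at_top)
  moreover have "\<forall>\<^sub>F t in at_right 0. - k \<le> sqdist_diff w z (Complex s2 t)"
    using sqdist_diff_tendsto_vertical[OF w0 z0 \<open>0 < horo_gap w z s2\<close>]
    by (simp add: filterlim_at_top)
  moreover note C
  ultimately have "\<forall>\<^sub>F t in at_right 0. k \<le> sqdist_diff z w (Complex s1 t)
      \<and> sqdist_diff z w (Complex s2 t) \<le> k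
      \<and> (\<exists>C. connected C \<and> C \<subseteq> hyp_plane \<inter> A \<and> Complex s1 t \<in> C \<and> Complex s2 t \<in> C)"
    by eventually_elim (auto simp: sqdist_diff_swap[of w z])
  then obtain t C where conn: "connected C" and CA: "C \<subseteq> hyp_plane \<inter> A"
    and p: "Complex s1 t \<in> C" "k \<le> sqdist_diff z w (Complex s1 t)"
    and q: "Complex s2 t \<in> C" "sqdist_diff z w (Complex s2 t) \<le> k"
    using eventually_happens'[OF trivial_limit_at_right_real] by blast
  have "continuous_on C (sqdist_diff z w)"
    using continuous_on_subset[OF continuous_on_sqdist_diff[OF z0 w0]] CA by blast
  hence "connected (sqdist_diff z w ` C)" using conn by (rule connected_continuous_image)
  hence "k \<in> sqdist_diff z w ` C"
    using p q by (auto simp: connected_iff_interval)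
  then obtain x where "x \<in> C" "sqdist_diff z w x = k" by blast
  thus ?thesis using CA by (auto simp: mem_square_hyperbola_iff hyp_plane_def)
qed

lemma convex_hyp_plane: "convex hyp_plane"
  by (simp add: hyp_plane_def convex_halfspace_Im_gt)

lemma square_hyperbola_near_boundary:
  assumes z0: "0 < Im z" and w0: "0 < Im w" and zw: "z \<noteq> w"
    and root: "horo_gap z w r = 0" and e: "0 < e"
  shows "\<exists>x\<in>ball (of_real r) e. x \<in> square_hyperbola k z w"
proof -
  obtain s1 s2 where s: "\<bar>s1 - r\<bar> < e / 2" "\<bar>s2 - r\<bar> < e / 2"
    and gaps: "0 < horo_gap z w s1" "horo_gap z w s2 < 0"
    using sign_change_at_simple_root[OF horo_gap_has_derivative _ root, of "e / 2"]
      horo_gap_simple_root[OF z0 w0 zw root] e by auto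
  have "\<exists>C. connected C \<and> C \<subseteq> hyp_plane \<inter> ball (of_real r) e
             \<and> Complex s1 t \<in> C \<and> Complex s2 t \<in> C" if t: "0 < t" "t < e / 2" for t
  proof (intro exI conjI)
    have "Complex s t \<in> hyp_plane \<inter> ball (of_real r) e" if "\<bar>s - r\<bar> < e / 2" for s
      using cmod_le[of "of_real r - Complex s t"] t that
      by (simp add: hyp_plane_def dist_norm abs_minus_commute)
    thus "closed_segment (Complex s1 t) (Complex s2 t) \<subseteq> hyp_plane \<inter> ball (of_real r) e"
      using s by (intro closed_segment_subset convex_Int convex_hyp_plane convex_ball) auto
  qed auto
  moreover have "\<forall>\<^sub>F t in at_right 0. 0 < t \<and> t < e / 2"
    using e by (auto simp: eventually_at_right_field intro!: exI[of _ "e / 2"])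
  ultimately show ?thesis
    by (intro square_hyperbola_meets_connected[OF z0 w0 gaps]) (auto elim: eventually_mono)
qed

lemma horo_gap_equal_heights:
  "Im z = Im w \<Longrightarrow> horo_gap z w s = Im z * (Re w - Re z) * (2 * s - Re z - Re w)"
  by (simp add: horo_gap_def cosh_numer_def power2_eq_square algebra_simps)

lemma horo_gap_signs_far_out:
  assumes z0: "0 < Im z" and zw: "z \<noteq> w" and heights: "Im z = Im w"
  shows "\<exists>s1 s2. M \<le> \<bar>s1\<bar> \<and> M \<le> \<bar>s2\<bar> \<and> 0 < horo_gap z w s1 \<and> horo_gap z w s2 < 0"
proof -
  define L where "L = \<bar>M\<bar> + \<bar>Re z + Re w\<bar> + 1"
  define a where "a = Im z * (Re w - Re z)"
  have "a \<noteq> 0" using z0 zw heights by (auto simp: a_def complex_eq_iff)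
  have "\<bar>M\<bar> + \<bar>Re z + Re w\<bar> < L" by (simp add: L_def)
  hence L: "0 < 2 * L - Re z - Re w" "2 * (- L) - Re z - Re w < 0" "M \<le> \<bar>L\<bar>" "M \<le> \<bar>- L\<bar>"
    by (simp_all add: abs_less_iff abs_le_iff)
  have gap: "horo_gap z w s = a * (2 * s - Re z - Re w)" for s
    using horo_gap_equal_heights[OF heights] by (simp add: a_def)
  show ?thesis
  proof (cases "0 < a")
    case True
    with L show ?thesis
      by (intro exI[of _ L] exI[of _ "- L"]) (simp add: gap mult_pos_pos mult_pos_neg)
  next
    case False
    hence "a < 0" using \<open>a \<noteq> 0\<close> by simp
    with L show ?thesis
      by (intro exI[of _ "- L"] exI[of _ L]) (simp add: gap mult_neg_neg mult_neg_pos)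
  qed
qed

lemma closed_segment_subset_Re_eq:
  "Re a = s \<Longrightarrow> Re b = s \<Longrightarrow> closed_segment a b \<subseteq> {x. Re x = s}"
  using convex_hyperplane[of "1 :: complex" s] by (intro closed_segment_subset) auto

lemma closed_segment_subset_Im_eq:
  "Im a = s \<Longrightarrow> Im b = s \<Longrightarrow> closed_segment a b \<subseteq> {x. Im x = s}"
  using convex_hyperplane[of \<i> s] by (intro closed_segment_subset) auto

lemma connected_set_joining_far_out:
  assumes s: "M \<le> \<bar>s1\<bar>" "M \<le> \<bar>s2\<bar>" and t: "0 < t"
  shows "\<exists>C. connected C \<and> C \<subseteq> hyp_plane \<inter> {x. M \<le> cmod x}
              \<and> Complex s1 t \<in> C \<and> Complex s2 t \<in> C"
proof -
  define h where "h = max M 1"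
  define A where "A = {x. M \<le> cmod x}"
  define C where "C = closed_segment (Complex s2 t) (Complex s2 h)
    \<union> closed_segment (Complex s2 h) (Complex s1 h) \<union> closed_segment (Complex s1 h) (Complex s1 t)"
  have "connected C"
    unfolding C_def by (intro connected_Un) auto
  moreover have "C \<subseteq> hyp_plane"
    unfolding C_def using t by (intro Un_least closed_segment_subset convex_hyp_plane)
      (auto simp: hyp_plane_def h_def)
  moreover have "C \<subseteq> A"
  proof -
    have Re_far: "{x. Re x = s} \<subseteq> A" if "M \<le> \<bar>s\<bar>" for s
      using that abs_Re_le_cmod by (auto simp: A_def intro: order_trans)
    have Im_far: "{x. Im x = h} \<subseteq> A"
    proof
      fix x assume "x \<in> {x. Im x = h}"
      thus "x \<in> A" using abs_Im_le_cmod[of x] max.cobounded1[of M 1]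
        unfolding A_def h_def by (simp add: abs_le_iff)
    qed
    have "closed_segment (Complex s2 t) (Complex s2 h) \<subseteq> A"
      by (rule subset_trans[OF closed_segment_subset_Re_eq Re_far[OF s(2)]]) simp_all
    moreover have "closed_segment (Complex s2 h) (Complex s1 h) \<subseteq> A"
      by (rule subset_trans[OF closed_segment_subset_Im_eq Im_far]) simp_all
    moreover have "closed_segment (Complex s1 h) (Complex s1 t) \<subseteq> A"
      by (rule subset_trans[OF closed_segment_subset_Re_eq Re_far[OF s(1)]]) simp_all
    ultimately show ?thesis by (simp add: C_def)
  qed
  ultimately show ?thesis by (auto simp: C_def A_def)
qed

lemma square_hyperbola_far_out:
  assumes z0: "0 < Im z" and w0: "0 < Im w" and zw: "z \<noteq> w" and heights: "Im z = Im w"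
  shows "\<exists>x. M \<le> cmod x \<and> x \<in> square_hyperbola k z w"
proof -
  obtain s1 s2 where s: "M \<le> \<bar>s1\<bar>" "M \<le> \<bar>s2\<bar>"
    and gaps: "0 < horo_gap z w s1" "horo_gap z w s2 < 0"
    using horo_gap_signs_far_out[OF z0 zw heights] by blast
  have "\<forall>\<^sub>F t in at_right 0. \<exists>C. connected C \<and> C \<subseteq> hyp_plane \<inter> {x. M \<le> cmod x}
                               \<and> Complex s1 t \<in> C \<and> Complex s2 t \<in> C"
    using eventually_at_right_less[of 0]
    by eventually_elim (rule connected_set_joining_far_out[OF s])
  from square_hyperbola_meets_connected[OF z0 w0 gaps this] show ?thesis by auto
qed

lemma boundary_endpoint_iff:
  assumes z0: "0 < Im z" and w0: "0 < Im w" and zw: "z \<noteq> w"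
  shows "(\<exists>X. (\<forall>n. X n \<in> square_hyperbola k z w) \<and> X \<longlonglongrightarrow> of_real r)
           \<longleftrightarrow> horo_gap z w r = 0"
proof
  assume "\<exists>X. (\<forall>n. X n \<in> square_hyperbola k z w) \<and> X \<longlonglongrightarrow> of_real r"
  thus "horo_gap z w r = 0" using square_hyperbola_no_sequence_to_boundary[OF z0 w0] by blast
next
  assume "horo_gap z w r = 0"
  hence "\<forall>n. \<exists>x\<in>ball (of_real r) (1 / real (Suc n)). x \<in> square_hyperbola k z w"
    using square_hyperbola_near_boundary[OF z0 w0 zw] by simp
  then obtain X where X: "\<And>n. X n \<in> ball (of_real r) (1 / real (Suc n))"
    "\<And>n. X n \<in> square_hyperbola k z w"
    by metis
  have "(\<lambda>n. X n - of_real r) \<longlonglongrightarrow> 0"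
    by (rule LIMSEQ_norm_0) (use X(1) in \<open>simp add: dist_norm norm_minus_commute\<close>)
  thus "\<exists>X. (\<forall>n. X n \<in> square_hyperbola k z w) \<and> X \<longlonglongrightarrow> of_real r"
    using X(2) LIM_zero_iff by blast
qed

lemma infinite_endpoint_iff:
  assumes z0: "0 < Im z" and w0: "0 < Im w" and zw: "z \<noteq> w"
  shows "(\<exists>X. (\<forall>n. X n \<in> square_hyperbola k z w) \<and> filterlim (\<lambda>n. cmod (X n)) at_top sequentially)
           \<longleftrightarrow> Im z = Im w"
proof
  assume "\<exists>X. (\<forall>n. X n \<in> square_hyperbola k z w) \<and> filterlim (\<lambda>n. cmod (X n)) at_top sequentially"
  thus "Im z = Im w" using square_hyperbola_no_sequence_to_infinity[OF z0 w0] by blast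
next
  assume "Im z = Im w"
  hence "\<forall>n. \<exists>x. real n \<le> cmod x \<and> x \<in> square_hyperbola k z w"
    using square_hyperbola_far_out[OF z0 w0 zw] by blast
  then obtain X where X: "\<And>n. real n \<le> cmod (X n)" "\<And>n. X n \<in> square_hyperbola k z w"
    by metis
  have "filterlim (\<lambda>n. cmod (X n)) at_top sequentially"
    by (rule filterlim_at_top_mono[OF filterlim_real_sequentially]) (use X(1) in auto)
  with X(2) show "\<exists>X. (\<forall>n. X n \<in> square_hyperbola k z w) \<and> filterlim (\<lambda>n. cmod (X n)) at_top sequentially"
    by blast
qed

lemma ideal_endpoints_square_hyperbola:
  assumes "0 < Im z" and "0 < Im w" and "z \<noteq> w"
  shows "ideal_endpoints (square_hyperbola k z w)
           = {Some r | r. horo_gap z w r = 0} \<union> {None | u :: unit. Im z = Im w}"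
  unfolding ideal_endpoints_def boundary_endpoint_iff[OF assms] infinite_endpoint_iff[OF assms] ..

lemma equidistant_line_eq_square_hyperbola:
  assumes "0 < Im z" and "0 < Im w"
  shows "equidistant_line z w = square_hyperbola 0 z w"
  using assms arcosh_nonneg_real
  by (auto simp: equidistant_line_def square_hyperbola_def hyp_plane_def dH_def)

theorem mainTheorem2:
  fixes z w :: complex and k :: real
  assumes "z \<in> hyp_plane" and "w \<in> hyp_plane" and "z \<noteq> w"
  shows "ideal_endpoints (square_hyperbola k z w) = ideal_endpoints (equidistant_line z w)"
proof -
  have z0: "0 < Im z" and w0: "0 < Im w" using assms(1,2) by (auto simp: hyp_plane_def)
  show ?thesis
    unfolding equidistant_line_eq_square_hyperbola[OF z0 w0]
      ideal_endpoints_square_hyperbola[OF z0 w0 assms(3)] ..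
qed

end
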